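(* For every entire function $f$ on $\mathbb{C}$, the vector-valued holomorphic function $\Phi=\Phi_f$ on $\mathbb{C}^k$ satisfies the differential system $$(-1)^{k+h}\frac{\partial\Phi}{\partial s_h}(s)=\frac{\partial (A(s)^{k-h}\Phi)}{\partial s_k}(s)\qquad\forall s\in\mathbb{C}^k,\ \forall h\in[1,k-1].\qquad(@)$$ Moreover, this system is integrable, in the sense that for any holomorphic solution $\Phi$ of $(@)$ and any $h,j\in[1,k-1]$, computing $\frac{\partial^2\Phi}{\partial s_j\partial s_h}$ by applying $(@)$ twice gives $$(-1)^{h+j}\frac{\partial^2\Phi}{\partial s_j\partial s_h}=\frac{\partial^2}{\partial s_k^2}\big(A(s)^{2k-h-j}\Phi\big),$$ which is symmetric in $(h,j)$; and if $\Phi$ is a holomorphic solution of $(@)$, then so is $A(s)\Phi$.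
   Context: Fix an integer $k\ge 2$. Use coordinates $s=(s_1,\dots,s_k)$ on $\mathbb{C}^k$, set $s_0:=1$ and $P_s(z):=\sum_{h=0}^k(-1)^hs_hz^{k-h}$. Let $E(z):=(1,z,\dots,z^{k-1})^T$. For an entire function $f$, define $\Phi_f(s):=\frac{1}{2i\pi}\int_{|\zeta|=R}\frac{f(\zeta)E(\zeta)\,d\zeta}{P_s(\zeta)}$, with $R$ large enough that all roots of $P_s$ lie in $\{|\zeta|<R\}$ (independent of such $R$; holomorphic in $s$). $A(s)$ is the $(k,k)$ companion matrix of $P_s$: its entries are $A_{i,i+1}=1$ for $i\in[1,k-1]$, its last row is $A_{k,j}=(-1)^{k-j}s_{k+1-j}$ for $j\in[1,k]$ (i.e. $((-1)^{k-1}s_k,\dots,(-1)^{h-1}s_h,\dots,s_1)$), and all other entries are $0$. *)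

theory Defs
  imports "HOL-Complex_Analysis.Complex_Analysis"
begin

text \<open>Points s of C^k are functions nat => complex, of which only the coordinates
  s 1, ..., s k matter.  Vectors of C^k are functions nat => complex whose
  components 1..k matter; (k,k) matrices are functions nat => nat => complex
  with indices in 1..k.  nat => complex carries the product topology.\<close>

definition coeffs_s :: "(nat \<Rightarrow> complex) \<Rightarrow> nat \<Rightarrow> complex" where
  "coeffs_s s h = (if h = 0 then 1 else s h)"

definition Ps :: "nat \<Rightarrow> (nat \<Rightarrow> complex) \<Rightarrow> complex \<Rightarrow> complex" where
  "Ps k s z = (\<Sum>h=0..k. (-1)^h * coeffs_s s h * z^(k-h))"

text \<open>A radius such that all roots of P_s lie in the open disc (Cauchy bound).\<close>
definition radius_s :: "nat \<Rightarrow> (nat \<Rightarrow> complex) \<Rightarrow> real" where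
  "radius_s k s = 1 + (\<Sum>h=1..k. cmod (s h))"

definition PhiF :: "nat \<Rightarrow> (complex \<Rightarrow> complex) \<Rightarrow> (nat \<Rightarrow> complex) \<Rightarrow> nat \<Rightarrow> complex" where
  "PhiF k f s i = (if i \<in> {1..k} then
      contour_integral (circlepath 0 (radius_s k s)) (\<lambda>\<zeta>. f \<zeta> * \<zeta>^(i-1) / Ps k s \<zeta>)
        / (2 * complex_of_real pi * \<i>)
     else 0)"

definition companion :: "nat \<Rightarrow> (nat \<Rightarrow> complex) \<Rightarrow> nat \<Rightarrow> nat \<Rightarrow> complex" where
  "companion k s i j =
     (if 1 \<le> i \<and> i \<le> k - 1 \<and> j = i + 1 then 1
      else if i = k \<and> 1 \<le> j \<and> j \<le> k then (-1)^(k-j) * s (k + 1 - j)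
      else 0)"

definition matvec :: "nat \<Rightarrow> (nat \<Rightarrow> nat \<Rightarrow> complex) \<Rightarrow> (nat \<Rightarrow> complex) \<Rightarrow> nat \<Rightarrow> complex" where
  "matvec k M v i = (\<Sum>j=1..k. M i j * v j)"

definition matpow_vec :: "nat \<Rightarrow> (nat \<Rightarrow> nat \<Rightarrow> complex) \<Rightarrow> nat \<Rightarrow> (nat \<Rightarrow> complex) \<Rightarrow> nat \<Rightarrow> complex" where
  "matpow_vec k M m v = (matvec k M ^^ m) v"

definition pderiv_s :: "nat \<Rightarrow> ((nat \<Rightarrow> complex) \<Rightarrow> nat \<Rightarrow> complex) \<Rightarrow> (nat \<Rightarrow> complex) \<Rightarrow> nat \<Rightarrow> complex" where
  "pderiv_s h F s i = deriv (\<lambda>t. F (s(h := t)) i) (s h)"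

text \<open>Holomorphic vector-valued function on C^k: depends only on s_1..s_k, and each
  component (1..k) is continuous and holomorphic in each variable separately
  (equivalent to joint holomorphy by Osgood's lemma).\<close>
definition holo_k :: "nat \<Rightarrow> ((nat \<Rightarrow> complex) \<Rightarrow> nat \<Rightarrow> complex) \<Rightarrow> bool" where
  "holo_k k \<Phi> \<longleftrightarrow>
     (\<forall>s s'. (\<forall>i\<in>{1..k}. s i = s' i) \<longrightarrow> (\<forall>i\<in>{1..k}. \<Phi> s i = \<Phi> s' i)) \<and>
     (\<forall>i\<in>{1..k}. continuous_on UNIV (\<lambda>s. \<Phi> s i)) \<and>
     (\<forall>s. \<forall>h\<in>{1..k}. \<forall>i\<in>{1..k}. (\<lambda>t. \<Phi> (s(h := t)) i) holomorphic_on UNIV)"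

definition solves_sys :: "nat \<Rightarrow> ((nat \<Rightarrow> complex) \<Rightarrow> nat \<Rightarrow> complex) \<Rightarrow> bool" where
  "solves_sys k \<Phi> \<longleftrightarrow>
     (\<forall>s. \<forall>h\<in>{1..k-1}. \<forall>i\<in>{1..k}.
        (-1)^(k+h) * pderiv_s h \<Phi> s i =
        pderiv_s k (\<lambda>s'. matpow_vec k (companion k s') (k-h) (\<Phi> s')) s i)"

end

theory Submission
  imports Defs
begin

text \<open>
  Write Phi_f(s)_i as the integral of f(z) z^(i-1) / P_s(z) over a large circle.  The last row
  of A(s) pairs with E(z) to give z^k - P_s(z), and the integral of the entire function f
  vanishes, so A(s) Phi_f = Phi_(z f).  Differentiating under the integral sign, where
  dP_s/ds_h = (-1)^h z^(k-h), shows that (-1)^(k+h) dPhi_f/ds_h and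
  d(A^(k-h) Phi_f)/ds_k = dPhi_(z^(k-h) f)/ds_k are the same integral.

  For an arbitrary solution Phi, the only entry of A(s) that depends on s_h is (k, k+1-h), and
  A^(k-j) moves component k+1-j to position 1.  Induction on m therefore gives
  d(A^m Phi)/ds_j = (-1)^(k+j) d(A^(m+k-j) Phi)/ds_k.  For m = 1 this says that A Phi is again
  a solution; for m = k-h, together with the symmetry of mixed partial derivatives of continuous
  separately holomorphic functions (via Cauchy's formula for the derivative), it gives the
  second-order formula.
\<close>

section \<open>The companion matrix\<close>

lemma companion_fun_upd:
  assumes "h \<in> {1..k}" and "j \<in> {1..k}"
  shows "companion k (s(h := t)) i j =
    companion k s i j + (if i = k \<and> j = k + 1 - h then (-1)^(h-1) else 0) * (t - s h)"
proof (cases "i = k")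
  case True
  have "k + 1 - j = h \<longleftrightarrow> j = k + 1 - h" and "j = k + 1 - h \<Longrightarrow> k - j = h - 1"
    using assms by auto
  with True assms show ?thesis
    by (auto simp: companion_def algebra_simps)
qed (auto simp: companion_def)

lemma continuous_on_companion: "continuous_on UNIV (\<lambda>s. companion k s i j)"
  by (cases "1 \<le> i \<and> i \<le> k - 1 \<and> j = i + 1"; cases "i = k \<and> 1 \<le> j \<and> j \<le> k")
    (auto simp: companion_def continuous_on_mult_left)

lemma has_field_derivative_companion:
  assumes "h \<in> {1..k}" and "j \<in> {1..k}"
  shows "((\<lambda>t. companion k (s(h := t)) i j) has_field_derivative
    (if i = k \<and> j = k + 1 - h then (-1)^(h-1) else 0)) (at x)"
  unfolding companion_fun_upd[OF assms] by (auto intro!: derivative_eq_intros)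

lemma holomorphic_on_companion:
  assumes "h \<in> {1..k}" and "j \<in> {1..k}"
  shows "(\<lambda>t. companion k (s(h := t)) i j) holomorphic_on A"
  unfolding companion_fun_upd[OF assms] by (intro holomorphic_intros)

lemma companion_row_less:
  assumes "1 \<le> i" and "i < k"
  shows "companion k s i j = (if j = i + 1 then 1 else 0)"
  using assms by (auto simp: companion_def)

lemma companion_last_row:
  assumes "j \<in> {1..k}"
  shows "companion k s k j = (-1)^(k-j) * s (k + 1 - j)"
  using assms by (auto simp: companion_def)

lemma Ps_eq: "Ps k s z = z^k + (\<Sum>h=1..k. (-1)^h * s h * z^(k-h))"
  unfolding Ps_def by (simp add: sum.atLeast_Suc_atMost coeffs_s_def)

lemma companion_last_row_poly:
  "(\<Sum>j=1..k. companion k s k j * z^(j-1)) = z^k - Ps k s z"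
proof -
  have "(\<Sum>j=1..k. companion k s k j * z^(j-1)) = (\<Sum>h=1..k. - ((-1)^h * s h * z^(k-h)))"
  proof (rule sum.reindex_bij_witness[of _ "\<lambda>h. k + 1 - h" "\<lambda>j. k + 1 - j"])
    fix j assume j: "j \<in> {1..k}"
    have "k - (k + 1 - j) = j - 1" and "(-1::complex)^(k + 1 - j) = - ((-1)^(k-j))"
      using j by (auto simp: Suc_diff_le)
    with j show "- ((-1)^(k + 1 - j) * s (k + 1 - j) * z^(k - (k + 1 - j))) =
        companion k s k j * z^(j-1)"
      by (simp add: companion_last_row)
  qed auto
  then show ?thesis
    unfolding Ps_eq by (simp add: sum_negf)
qed

lemma matvec_cong:
  assumes "\<And>j. j \<in> {1..k} \<Longrightarrow> v j = w j"
  shows "matvec k M v = matvec k M w"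
  unfolding matvec_def using assms by (intro ext sum.cong) auto

lemma matpow_vec_0 [simp]: "matpow_vec k M 0 v = v"
  by (simp add: matpow_vec_def)

lemma matpow_vec_Suc: "matpow_vec k M (Suc m) v = matvec k M (matpow_vec k M m v)"
  by (simp add: matpow_vec_def)

lemma matpow_vec_Suc': "matpow_vec k M (Suc m) v = matpow_vec k M m (matvec k M v)"
  by (simp add: matpow_vec_def funpow_swap1)

lemma matpow_vec_add: "matpow_vec k M (m + n) v = matpow_vec k M m (matpow_vec k M n v)"
  by (simp add: matpow_vec_def funpow_add)

lemma matvec_companion_less:
  assumes "1 \<le> i" and "i < k"
  shows "matvec k (companion k s) v i = v (i + 1)"
proof -
  have "matvec k (companion k s) v i = (\<Sum>j=1..k. if j = i + 1 then v j else 0)"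
    unfolding matvec_def using assms by (intro sum.cong) (auto simp: companion_row_less)
  also have "\<dots> = v (i + 1)"
    using assms by (subst sum.delta) auto
  finally show ?thesis .
qed

lemma matpow_vec_companion_shift:
  assumes "1 \<le> i" and "i + m \<le> k"
  shows "matpow_vec k (companion k s) m v i = v (i + m)"
  using assms(2)
proof (induction m arbitrary: v)
  case (Suc m)
  then show ?case
    using assms(1) by (simp add: matpow_vec_Suc' matvec_companion_less)
qed simp

lemma matpow_vec_companion_first:
  assumes "j \<in> {1..k}"
  shows "matpow_vec k (companion k s) (m + (k-j)) v 1 = matpow_vec k (companion k s) m v (k + 1 - j)"
proof -
  have "matpow_vec k (companion k s) (m + (k-j)) v 1 =
      matpow_vec k (companion k s) (k-j) (matpow_vec k (companion k s) m v) 1"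
    by (simp only: add.commute[of m] matpow_vec_add)
  also have "\<dots> = matpow_vec k (companion k s) m v (k + 1 - j)"
    using assms by (subst matpow_vec_companion_shift) (auto simp: Suc_diff_le)
  finally show ?thesis .
qed

section \<open>Solutions of the system\<close>

definition separately_holomorphic :: "nat \<Rightarrow> ((nat \<Rightarrow> complex) \<Rightarrow> nat \<Rightarrow> complex) \<Rightarrow> bool" where
  "separately_holomorphic k G \<longleftrightarrow>
     (\<forall>i\<in>{1..k}. continuous_on UNIV (\<lambda>s. G s i)) \<and>
     (\<forall>s. \<forall>h\<in>{1..k}. \<forall>i\<in>{1..k}. (\<lambda>t. G (s(h := t)) i) holomorphic_on UNIV)"

lemma holo_k_imp_separately_holomorphic: "holo_k k \<Phi> \<Longrightarrow> separately_holomorphic k \<Phi>"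
  unfolding holo_k_def separately_holomorphic_def by blast

lemma separately_holomorphic_matvec_companion:
  assumes "separately_holomorphic k G"
  shows "separately_holomorphic k (\<lambda>s. matvec k (companion k s) (G s))"
  using assms unfolding separately_holomorphic_def matvec_def
  by (auto intro!: continuous_on_sum continuous_on_mult continuous_on_companion
      holomorphic_on_sum holomorphic_on_mult holomorphic_on_companion)

lemma separately_holomorphic_matpow_companion:
  assumes "separately_holomorphic k G"
  shows "separately_holomorphic k (\<lambda>s. matpow_vec k (companion k s) m (G s))"
proof (induction m)
  case (Suc m)
  then show ?case
    by (simp add: matpow_vec_Suc separately_holomorphic_matvec_companion)
qed (simp add: assms)

lemma pderiv_s_matvec_companion:
  assumes h: "h \<in> {1..k}" and G: "separately_holomorphic k G"
  shows "pderiv_s h (\<lambda>s. matvec k (companion k s) (G s)) s i =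
    (if i = k then (-1)^(h-1) * G s (k + 1 - h) else 0) + matvec k (companion k s) (pderiv_s h G s) i"
proof -
  let ?c = "\<lambda>j. if i = k \<and> j = k + 1 - h then (-1)^(h-1) else 0 :: complex"
  have "((\<lambda>t. \<Sum>j=1..k. companion k (s(h := t)) i j * G (s(h := t)) j) has_field_derivative
      (\<Sum>j=1..k. ?c j * G s j + companion k s i j * pderiv_s h G s j)) (at (s h))"
  proof (rule DERIV_sum)
    fix j assume j: "j \<in> {1..k}"
    have "((\<lambda>t. G (s(h := t)) j) has_field_derivative pderiv_s h G s j) (at (s h))"
      using G h j unfolding separately_holomorphic_def pderiv_s_def
      by (intro holomorphic_derivI[of _ UNIV]) auto
    from DERIV_mult[OF has_field_derivative_companion[OF h j, of s i "s h"] this]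
    show "((\<lambda>t. companion k (s(h := t)) i j * G (s(h := t)) j) has_field_derivative
        ?c j * G s j + companion k s i j * pderiv_s h G s j) (at (s h))"
      by (rule DERIV_cong) (simp add: mult.commute)
  qed
  moreover have "(\<Sum>j=1..k. ?c j * G s j) = (if i = k then (-1)^(h-1) * G s (k + 1 - h) else 0)"
    using h by (auto simp: if_distrib[of "\<lambda>x. x * _"] cong: if_cong)
  ultimately show ?thesis
    unfolding pderiv_s_def[of h "\<lambda>s. matvec k (companion k s) (G s)"] matvec_def
    by (simp add: DERIV_imp_deriv sum.distrib)
qed

lemma solves_sys_pderiv_matpow:
  assumes \<Phi>: "separately_holomorphic k \<Phi>" and sol: "solves_sys k \<Phi>"
    and j: "j \<in> {1..k-1}" and i: "i \<in> {1..k}"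
  shows "pderiv_s j (\<lambda>s. matpow_vec k (companion k s) m (\<Phi> s)) s i =
    (-1)^(k+j) * pderiv_s k (\<lambda>s. matpow_vec k (companion k s) (m + (k-j)) (\<Phi> s)) s i"
  using i
proof (induction m arbitrary: s i)
  case 0
  with sol j have "(-1)^(k+j) * pderiv_s j \<Phi> s i =
      pderiv_s k (\<lambda>s. matpow_vec k (companion k s) (k-j) (\<Phi> s)) s i"
    unfolding solves_sys_def by blast
  from this[symmetric] show ?case
    by simp
next
  case (Suc m)
  define G where "G = (\<lambda>s. matpow_vec k (companion k s) m (\<Phi> s))"
  define H where "H = (\<lambda>s. matpow_vec k (companion k s) (m + (k-j)) (\<Phi> s))"
  have jk: "j \<in> {1..k}" "k \<in> {1..k}"
    using j by auto
  have HG: "H s 1 = G s (k + 1 - j)"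
    unfolding H_def G_def using jk(1) by (rule matpow_vec_companion_first)
  have IH: "matvec k (companion k s) (pderiv_s j G s) i =
      (-1)^(k+j) * matvec k (companion k s) (pderiv_s k H s) i"
  proof -
    have "matvec k (companion k s) (pderiv_s j G s) =
        matvec k (companion k s) (\<lambda>l. (-1)^(k+j) * pderiv_s k H s l)"
      using Suc.IH unfolding G_def H_def by (intro matvec_cong) auto
    then show ?thesis
      by (simp add: matvec_def sum_distrib_left mult.left_commute)
  qed
  have sign: "(-1::complex)^(j-1) = (-1)^(k+j) * (-1)^(k-1)"
    using jk by (cases k; cases j) (auto simp: power_add)
  have "pderiv_s j (\<lambda>s. matpow_vec k (companion k s) (Suc m) (\<Phi> s)) s i =
      (if i = k then (-1)^(j-1) * G s (k + 1 - j) else 0) + matvec k (companion k s) (pderiv_s j G s) i"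
    using pderiv_s_matvec_companion[OF jk(1) separately_holomorphic_matpow_companion[OF \<Phi>]]
    by (simp add: matpow_vec_Suc G_def)
  also have "\<dots> = (-1)^(k+j) *
      ((if i = k then (-1)^(k-1) * H s 1 else 0) + matvec k (companion k s) (pderiv_s k H s) i)"
    unfolding IH HG sign by (simp add: distrib_left)
  also have "\<dots> = (-1)^(k+j) * pderiv_s k (\<lambda>s. matpow_vec k (companion k s) (Suc m + (k-j)) (\<Phi> s)) s i"
    using pderiv_s_matvec_companion[OF jk(2) separately_holomorphic_matpow_companion[OF \<Phi>]]
    by (simp add: matpow_vec_Suc H_def)
  finally show ?case .
qed

lemma holo_k_matvec_companion:
  assumes "holo_k k \<Phi>"
  shows "holo_k k (\<lambda>s. matvec k (companion k s) (\<Phi> s))"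
proof -
  have "matvec k (companion k s) (\<Phi> s) i = matvec k (companion k s') (\<Phi> s') i"
    if eq: "\<forall>l\<in>{1..k}. s l = s' l" for s s' :: "nat \<Rightarrow> complex" and i
  proof -
    have "companion k s i j = companion k s' i j" if "j \<in> {1..k}" for j
    proof -
      have "k + 1 - j \<in> {1..k}"
        using that by auto
      with eq show ?thesis
        by (simp add: companion_def)
    qed
    moreover have "\<Phi> s j = \<Phi> s' j" if "j \<in> {1..k}" for j
      using assms eq that unfolding holo_k_def by blast
    ultimately show ?thesis
      unfolding matvec_def by (intro sum.cong) auto
  qed
  with separately_holomorphic_matvec_companion[OF holo_k_imp_separately_holomorphic[OF assms]]
  show ?thesis
    unfolding holo_k_def separately_holomorphic_def by blast
qed

lemma solves_sys_matvec_companion: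
  assumes "separately_holomorphic k \<Phi>" and "solves_sys k \<Phi>"
  shows "solves_sys k (\<lambda>s. matvec k (companion k s) (\<Phi> s))"
  unfolding solves_sys_def
proof (intro allI ballI)
  fix s h i assume "h \<in> {1..k-1}" and "i \<in> {1..k}"
  from solves_sys_pderiv_matpow[OF assms this, of 1 s]
  have "pderiv_s h (\<lambda>s. matvec k (companion k s) (\<Phi> s)) s i = (-1)^(k+h) *
      pderiv_s k (\<lambda>s'. matpow_vec k (companion k s') (k-h) (matvec k (companion k s') (\<Phi> s'))) s i"
    by (simp add: matpow_vec_Suc')
  then show "(-1)^(k+h) * pderiv_s h (\<lambda>s. matvec k (companion k s) (\<Phi> s)) s i =
      pderiv_s k (\<lambda>s'. matpow_vec k (companion k s') (k-h) (matvec k (companion k s') (\<Phi> s'))) s i"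
    by simp
qed

section \<open>Parametric Cauchy integrals\<close>

lemma contour_integral_circlepath_eq_integral:
  "contour_integral (circlepath c r) F =
    integral {0..1} (\<lambda>t. F (circlepath c r t) * (2 * pi * \<i> * r * exp (2 * of_real pi * \<i> * of_real t)))"
  unfolding contour_integral_integral vector_derivative_circlepath by simp

lemma contour_integral_circlepath_lmul:
  "contour_integral (circlepath c r) (\<lambda>z. a * F z) = a * contour_integral (circlepath c r) F"
  by (simp add: contour_integral_circlepath_eq_integral mult.assoc)

lemma continuous_on_circlepath_integral_param:
  fixes F :: "'a::topological_space \<Rightarrow> complex \<Rightarrow> complex"
  assumes "continuous_on (U \<times> {0..1}) (\<lambda>(x, t). F x (circlepath (c x) r t))"
  shows "continuous_on U (\<lambda>x. contour_integral (circlepath (c x) r) (F x))"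
proof -
  have "continuous_on (U \<times> {0..1})
      (\<lambda>p::'a \<times> real. 2 * pi * \<i> * r * exp (2 * of_real pi * \<i> * of_real (snd p)))"
    by (intro continuous_intros)
  from continuous_on_mult[OF assms this]
  have "continuous_on (U \<times> cbox 0 1)
      (\<lambda>(x, t). F x (circlepath (c x) r t) * (2 * pi * \<i> * r * exp (2 * of_real pi * \<i> * of_real t)))"
    by (simp add: split_beta)
  from integral_continuous_on_param[OF this] show ?thesis
    by (simp add: contour_integral_circlepath_eq_integral)
qed

lemma circlepath_in_sphere: "t \<in> {0..1} \<Longrightarrow> circlepath c r t \<in> sphere c \<bar>r\<bar>"
  using path_image_circlepath[of c r] unfolding path_image_def by blast

lemma continuous_on_circlepath_param:
  assumes "continuous_on (U \<times> sphere c \<bar>r\<bar>) (\<lambda>(x, w). F x w)"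
  shows "continuous_on (U \<times> {0..1}) (\<lambda>(x, t). F x (circlepath c r t))"
proof -
  have cont: "continuous_on (U \<times> {0..1}) (\<lambda>p. (fst p, circlepath c r (snd p)))"
    unfolding circlepath by (intro continuous_intros)
  have "(\<lambda>p. (fst p, circlepath c r (snd p))) ` (U \<times> {0..1}) \<subseteq> U \<times> sphere c \<bar>r\<bar>"
    using circlepath_in_sphere by auto
  from continuous_on_compose2[OF assms cont this] show ?thesis
    by (simp add: split_beta)
qed

lemma has_field_derivative_circlepath_integral_param:
  fixes F F' :: "complex \<Rightarrow> complex \<Rightarrow> complex"
  assumes U: "open U" "convex U" "x0 \<in> U"
    and D: "\<And>x w. x \<in> U \<Longrightarrow> w \<in> sphere c \<bar>r\<bar> \<Longrightarrow> ((\<lambda>x. F x w) has_field_derivative F' x w) (at x)"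
    and C: "continuous_on (U \<times> sphere c \<bar>r\<bar>) (\<lambda>(x, w). F x w)"
    and C': "continuous_on (U \<times> sphere c \<bar>r\<bar>) (\<lambda>(x, w). F' x w)"
  shows "((\<lambda>x. contour_integral (circlepath c r) (F x)) has_field_derivative
    contour_integral (circlepath c r) (F' x0)) (at x0)"
proof -
  let ?\<gamma>' = "\<lambda>t. 2 * pi * \<i> * r * exp (2 * of_real pi * \<i> * of_real t)"
  have \<gamma>': "continuous_on (U \<times> {0..1}) (\<lambda>p::complex \<times> real. ?\<gamma>' (snd p))"
    by (intro continuous_intros)
  have "((\<lambda>x. integral (cbox 0 1) (\<lambda>t. F x (circlepath c r t) * ?\<gamma>' t)) has_field_derivative
      integral (cbox 0 1) (\<lambda>t. F' x0 (circlepath c r t) * ?\<gamma>' t)) (at x0 within U)"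
  proof (rule leibniz_rule_field_derivative)
    fix x t assume x: "x \<in> U" and t: "t \<in> cbox 0 (1::real)"
    have "((\<lambda>x. F x (circlepath c r t)) has_field_derivative F' x (circlepath c r t)) (at x)"
      using D[OF x circlepath_in_sphere] t by (simp add: cbox_interval)
    then show "((\<lambda>x. F x (circlepath c r t) * ?\<gamma>' t) has_field_derivative
        F' x (circlepath c r t) * ?\<gamma>' t) (at x within U)"
      by (rule has_field_derivative_at_within[OF DERIV_cmult_right])
  next
    fix x assume "x \<in> U"
    have "continuous_on {0..1} (\<lambda>t. (x, t))"
      by (intro continuous_intros)
    moreover have "(\<lambda>t. (x, t)) ` {0..1} \<subseteq> U \<times> {0..1}"
      using \<open>x \<in> U\<close> by blast
    ultimately have "continuous_on {0..1} (\<lambda>t. F x (circlepath c r t))"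
      using continuous_on_compose2[OF continuous_on_circlepath_param[OF C]] by fastforce
    then show "(\<lambda>t. F x (circlepath c r t) * ?\<gamma>' t) integrable_on cbox 0 1"
      unfolding cbox_interval by (intro integrable_continuous_interval continuous_intros)
  next
    show "continuous_on (U \<times> cbox 0 1) (\<lambda>(x, t). F' x (circlepath c r t) * ?\<gamma>' t)"
      using continuous_on_mult[OF continuous_on_circlepath_param[OF C'] \<gamma>']
      by (simp add: split_beta cbox_interval)
  qed (use U in simp_all)
  then show ?thesis
    by (simp add: at_within_open[OF U(3,1)] contour_integral_circlepath_eq_integral cbox_interval)
qed

lemma deriv_eq_circlepath_integral:
  assumes "f holomorphic_on UNIV"
  shows "deriv f v = contour_integral (circlepath v 1) (\<lambda>w. f w / (w - v)^2) / (2 * pi * \<i>)"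
proof -
  have "((\<lambda>w. f w / (w - v)^Suc 1) has_contour_integral (2 * pi * \<i>) / fact 1 * (deriv ^^ 1) f v)
      (circlepath v 1)"
    by (intro Cauchy_has_contour_integral_higher_derivative_circlepath holomorphic_on_imp_continuous_on
        holomorphic_on_subset[OF assms]) auto
  from contour_integral_unique[OF this] show ?thesis
    by (simp add: power2_eq_square)
qed

lemma continuous_on_deriv_param:
  fixes F :: "complex \<Rightarrow> complex \<Rightarrow> complex"
  assumes C: "continuous_on UNIV (\<lambda>(u, v). F u v)" and H: "\<And>u. F u holomorphic_on UNIV"
  shows "continuous_on UNIV (\<lambda>(u, v). deriv (F u) v)"
proof -
  let ?e = "\<lambda>t::real. exp (2 * of_real pi * \<i> * of_real t)"
  have circ: "circlepath v 1 t = v + ?e t" for v t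
    by (simp add: circlepath)
  have "continuous_on (UNIV \<times> {0..1}) (\<lambda>p. (fst (fst p), snd (fst p) + ?e (snd p)))"
    by (intro continuous_intros)
  from continuous_on_compose2[OF C this]
  have "continuous_on (UNIV \<times> {0..1}) (\<lambda>p. F (fst (fst p)) (snd (fst p) + ?e (snd p)))"
    by (simp add: split_beta)
  then have "continuous_on (UNIV \<times> {0..1})
      (\<lambda>p. F (fst (fst p)) (snd (fst p) + ?e (snd p)) / (?e (snd p))^2)"
    by (intro continuous_intros) auto
  then have "continuous_on UNIV
      (\<lambda>x. contour_integral (circlepath (snd x) 1) (\<lambda>w. F (fst x) w / (w - snd x)^2))"
    by (intro continuous_on_circlepath_integral_param) (simp add: split_beta circ)
  then have "continuous_on UNIV
      (\<lambda>x. contour_integral (circlepath (snd x) 1) (\<lambda>w. F (fst x) w / (w - snd x)^2) / (2 * pi * \<i>))"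
    by (intro continuous_intros) auto
  then show ?thesis
    by (simp add: split_beta deriv_eq_circlepath_integral[OF H])
qed

lemma continuous_on_swap_UNIV:
  "continuous_on UNIV (\<lambda>(u, v). g u v) \<Longrightarrow> continuous_on UNIV (\<lambda>(v, u). g u v)"
  using continuous_on_swap_args[of UNIV UNIV g] by simp

lemma has_field_derivative_deriv_param:
  fixes g :: "complex \<Rightarrow> complex \<Rightarrow> complex"
  assumes cont: "continuous_on UNIV (\<lambda>(u, v). g u v)"
    and hol_v: "\<And>u. g u holomorphic_on UNIV" and hol_u: "\<And>v. (\<lambda>u. g u v) holomorphic_on UNIV"
  shows "((\<lambda>u. deriv (g u) v0) has_field_derivative
    contour_integral (circlepath v0 1) (\<lambda>w. deriv (\<lambda>u. g u w) u0 / (w - v0)^2) / (2 * pi * \<i>)) (at u0)"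
proof -
  have "continuous_on UNIV (\<lambda>(v, u). deriv (\<lambda>u. g u v) u)"
    by (rule continuous_on_deriv_param[OF continuous_on_swap_UNIV[OF cont] hol_u])
  then have cont_du: "continuous_on UNIV (\<lambda>(u, w). deriv (\<lambda>u. g u w) u)"
    by (rule continuous_on_swap_UNIV)
  have cont_div: "continuous_on (UNIV \<times> sphere v0 \<bar>1\<bar>) (\<lambda>(u, w). G u w / (w - v0)^2)"
    if "continuous_on UNIV (\<lambda>(u, w). G u w)" for G :: "complex \<Rightarrow> complex \<Rightarrow> complex"
  proof -
    have "continuous_on (UNIV \<times> sphere v0 \<bar>1\<bar>) (\<lambda>p. G (fst p) (snd p))"
      using continuous_on_subset[OF that] by (simp add: split_beta)
    moreover have "continuous_on (UNIV \<times> sphere v0 \<bar>1\<bar>) (\<lambda>p::complex \<times> complex. (snd p - v0)^2)"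
      by (intro continuous_intros)
    ultimately show ?thesis
      by (auto simp: split_beta intro!: continuous_on_divide)
  qed
  have "((\<lambda>u. contour_integral (circlepath v0 1) (\<lambda>w. g u w / (w - v0)^2)) has_field_derivative
      contour_integral (circlepath v0 1) (\<lambda>w. deriv (\<lambda>u. g u w) u0 / (w - v0)^2)) (at u0)"
  proof (rule has_field_derivative_circlepath_integral_param[where U = UNIV])
    fix u w
    show "((\<lambda>u. g u w / (w - v0)^2) has_field_derivative deriv (\<lambda>u. g u w) u / (w - v0)^2) (at u)"
      by (intro DERIV_cdivide holomorphic_derivI[OF hol_u open_UNIV UNIV_I])
  qed (use cont_div[OF cont] cont_div[OF cont_du] in simp_all)
  from DERIV_cdivide[OF this, of "2 * pi * \<i>"] show ?thesis
    by (simp add: deriv_eq_circlepath_integral[OF hol_v])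
qed

lemma holomorphic_on_deriv_param:
  fixes g :: "complex \<Rightarrow> complex \<Rightarrow> complex"
  assumes "continuous_on UNIV (\<lambda>(u, v). g u v)"
    and "\<And>u. g u holomorphic_on UNIV" and "\<And>v. (\<lambda>u. g u v) holomorphic_on UNIV"
  shows "(\<lambda>v. deriv (\<lambda>u. g u v) u0) holomorphic_on UNIV"
  using has_field_derivative_deriv_param[OF continuous_on_swap_UNIV[OF assms(1)] assms(3,2)]
  by (auto simp: holomorphic_on_open)

lemma has_field_derivative_deriv_swap:
  fixes g :: "complex \<Rightarrow> complex \<Rightarrow> complex"
  assumes "continuous_on UNIV (\<lambda>(u, v). g u v)"
    and "\<And>u. g u holomorphic_on UNIV" and "\<And>v. (\<lambda>u. g u v) holomorphic_on UNIV"
  shows "((\<lambda>u. deriv (g u) v0) has_field_derivative deriv (\<lambda>v. deriv (\<lambda>u. g u v) u0) v0) (at u0)"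
  using has_field_derivative_deriv_param[OF assms]
  by (simp add: deriv_eq_circlepath_integral[OF holomorphic_on_deriv_param[OF assms]])

section \<open>Second derivatives of solutions\<close>

lemma separately_holomorphic_slice:
  assumes G: "separately_holomorphic k G"
    and "j \<in> {1..k}" "h \<in> {1..k}" "i \<in> {1..k}" "j \<noteq> h"
  shows "continuous_on UNIV (\<lambda>(u, v). G (s(j := u, h := v)) i)"
    and "(\<lambda>v. G (s(j := u, h := v)) i) holomorphic_on UNIV"
    and "(\<lambda>u. G (s(j := u, h := v)) i) holomorphic_on UNIV"
proof -
  have upd: "continuous_on UNIV (\<lambda>p::complex \<times> complex. s(j := fst p, h := snd p))"
  proof (rule continuous_on_coordinatewise_then_product)
    fix l
    show "continuous_on UNIV (\<lambda>p::complex \<times> complex. (s(j := fst p, h := snd p)) l)"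
      by (cases "l = h"; cases "l = j")
        (simp_all add: continuous_on_fst[OF continuous_on_id] continuous_on_snd[OF continuous_on_id])
  qed
  have "continuous_on UNIV (\<lambda>s. G s i)"
    using G \<open>i \<in> {1..k}\<close> unfolding separately_holomorphic_def by blast
  from continuous_on_compose2[OF this upd subset_UNIV]
  show "continuous_on UNIV (\<lambda>(u, v). G (s(j := u, h := v)) i)"
    by (simp add: split_beta)
  show "(\<lambda>v. G (s(j := u, h := v)) i) holomorphic_on UNIV"
    using G assms(3,4) unfolding separately_holomorphic_def by blast
  have "(\<lambda>u. G (s(h := v, j := u)) i) holomorphic_on UNIV"
    using G assms(2,4) unfolding separately_holomorphic_def by blast
  then show "(\<lambda>u. G (s(j := u, h := v)) i) holomorphic_on UNIV"
    using \<open>j \<noteq> h\<close> by (simp add: fun_upd_twist)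
qed

lemma pderiv_s_commute:
  assumes G: "separately_holomorphic k G"
    and j: "j \<in> {1..k}" and h: "h \<in> {1..k}" and i: "i \<in> {1..k}"
  shows "pderiv_s j (pderiv_s h G) s i = pderiv_s h (pderiv_s j G) s i"
proof (cases "j = h")
  case False
  define g where "g = (\<lambda>u v. G (s(j := u, h := v)) i)"
  have "pderiv_s h G (s(j := u)) i = deriv (g u) (s h)" for u
    using False by (simp add: pderiv_s_def g_def)
  moreover have "pderiv_s j G (s(h := v)) i = deriv (\<lambda>u. g u v) (s j)" for v
    using False by (simp add: pderiv_s_def g_def fun_upd_twist)
  moreover have "((\<lambda>u. deriv (g u) (s h)) has_field_derivative
      deriv (\<lambda>v. deriv (\<lambda>u. g u v) (s j)) (s h)) (at (s j))"
    unfolding g_def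
    by (rule has_field_derivative_deriv_swap[OF separately_holomorphic_slice[OF G j h i False]])
  ultimately show ?thesis
    by (simp add: pderiv_s_def DERIV_imp_deriv)
qed simp

lemma holomorphic_on_pderiv_s:
  assumes G: "separately_holomorphic k G"
    and j: "j \<in> {1..k}" and h: "h \<in> {1..k}" and i: "i \<in> {1..k}"
  shows "(\<lambda>t. pderiv_s h G (s(j := t)) i) holomorphic_on UNIV"
proof (cases "j = h")
  case True
  have "(\<lambda>t. G (s(h := t)) i) holomorphic_on UNIV"
    using G h i unfolding separately_holomorphic_def by blast
  then have "deriv (\<lambda>t. G (s(h := t)) i) holomorphic_on UNIV"
    by (rule holomorphic_deriv) simp
  with True show ?thesis
    by (simp add: pderiv_s_def)
next
  case False
  note slice = separately_holomorphic_slice[OF G j h i False]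
  have "(\<lambda>u. deriv (\<lambda>v. G (s(j := u, h := v)) i) (s h)) holomorphic_on UNIV"
    by (rule holomorphic_on_deriv_param[OF continuous_on_swap_UNIV[OF slice(1)] slice(3) slice(2)])
  with False show ?thesis
    by (simp add: pderiv_s_def)
qed

lemma pderiv_s_eq_cmult:
  assumes "\<And>s. F s i = c * F' s i" and "(\<lambda>t. F' (s(j := t)) i) holomorphic_on UNIV"
  shows "pderiv_s j F s i = c * pderiv_s j F' s i"
  unfolding pderiv_s_def assms(1)
  by (rule deriv_cmult[OF holomorphic_on_imp_differentiable_at[OF assms(2) open_UNIV UNIV_I]])

lemma solves_sys_second_order:
  assumes \<Phi>: "separately_holomorphic k \<Phi>" and sol: "solves_sys k \<Phi>"
    and h: "h \<in> {1..k-1}" and j: "j \<in> {1..k-1}" and i: "i \<in> {1..k}"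
  shows "(-1)^(h+j) * pderiv_s j (pderiv_s h \<Phi>) s i =
    pderiv_s k (pderiv_s k (\<lambda>s'. matpow_vec k (companion k s') (2*k-h-j) (\<Phi> s'))) s i"
proof -
  define G where "G = (\<lambda>s. matpow_vec k (companion k s) (k-h) (\<Phi> s))"
  define H where "H = (\<lambda>s. matpow_vec k (companion k s) (2*k-h-j) (\<Phi> s))"
  have G_hol: "separately_holomorphic k G" and H_hol: "separately_holomorphic k H"
    unfolding G_def H_def by (simp_all add: separately_holomorphic_matpow_companion[OF \<Phi>])
  have jk: "j \<in> {1..k}" "k \<in> {1..k}"
    using j by auto
  have deriv_h: "pderiv_s h \<Phi> s' i = (-1)^(k+h) * pderiv_s k G s' i" for s'
    using solves_sys_pderiv_matpow[OF \<Phi> sol h i, of 0] by (simp add: G_def)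
  have deriv_j: "pderiv_s j G s' i = (-1)^(k+j) * pderiv_s k H s' i" for s'
  proof -
    have "k - h + (k - j) = 2*k-h-j"
      using h j by auto
    with solves_sys_pderiv_matpow[OF \<Phi> sol j i, of "k-h"] show ?thesis
      by (simp add: G_def H_def)
  qed
  have "pderiv_s j (pderiv_s h \<Phi>) s i = (-1)^(k+h) * pderiv_s j (pderiv_s k G) s i"
    using deriv_h holomorphic_on_pderiv_s[OF G_hol jk i] by (rule pderiv_s_eq_cmult)
  also have "\<dots> = (-1)^(k+h) * pderiv_s k (pderiv_s j G) s i"
    using pderiv_s_commute[OF G_hol jk i] by simp
  also have "\<dots> = (-1)^(k+h) * ((-1)^(k+j) * pderiv_s k (pderiv_s k H) s i)"
    using pderiv_s_eq_cmult[where F = "pderiv_s j G" and F' = "pderiv_s k H",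
        OF deriv_j holomorphic_on_pderiv_s[OF H_hol jk(2) jk(2) i]]
    by simp
  finally have "pderiv_s j (pderiv_s h \<Phi>) s i =
      (-1)^(h+j) * pderiv_s k (pderiv_s k H) s i"
    by (simp add: power_add)
  then show ?thesis
    by (simp add: H_def mult.assoc[symmetric] flip: power_add)
qed

section \<open>The integral representation\<close>

lemma Ps_nonzero:
  assumes z: "radius_s k s \<le> cmod z"
  shows "Ps k s z \<noteq> 0"
proof (cases "k = 0")
  case False
  define S where "S = (\<Sum>h=1..k. cmod (s h))"
  have S: "S \<ge> 0" and zS: "S + 1 \<le> cmod z"
    using z unfolding S_def radius_s_def by (auto intro: sum_nonneg)
  have "cmod (\<Sum>h=1..k. (-1)^h * s h * z^(k-h)) \<le> (\<Sum>h=1..k. cmod (s h) * cmod z ^ (k-h))"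
    by (rule order_trans[OF norm_sum]) (simp add: norm_mult norm_power)
  also have "\<dots> \<le> (\<Sum>h=1..k. cmod (s h) * cmod z ^ (k-1))"
    using S zS by (intro sum_mono mult_left_mono power_increasing) auto
  also have "\<dots> = S * cmod z ^ (k-1)"
    unfolding S_def by (simp add: sum_distrib_right)
  also have "\<dots> < cmod z * cmod z ^ (k-1)"
    using S zS by (intro mult_strict_right_mono zero_less_power) auto
  also have "\<dots> = cmod (z^k)"
    using False by (cases k) (simp_all add: norm_mult norm_power)
  finally have "cmod (\<Sum>h=1..k. (-1)^h * s h * z^(k-h)) \<noteq> cmod (- (z^k))"
    by simp
  then show ?thesis
    unfolding Ps_eq add_eq_0_iff by metis
qed (simp add: Ps_eq)

lemma radius_s_ge_1: "radius_s k s \<ge> 1"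
  unfolding radius_s_def by (simp add: sum_nonneg)

lemma Ps_fun_upd:
  assumes "h \<in> {1..k}"
  shows "Ps k (s(h := t)) z = Ps k s z + (-1)^h * z^(k-h) * (t - s h)"
proof -
  have "(\<Sum>l=1..k. (-1)^l * (s(h := t)) l * z^(k-l)) =
      (\<Sum>l=1..k. (-1)^l * s l * z^(k-l) + (if l = h then (-1)^h * z^(k-h) * (t - s h) else 0))"
    by (intro sum.cong) (auto simp: algebra_simps)
  with assms show ?thesis
    by (simp add: Ps_eq sum.distrib)
qed

lemma radius_s_fun_upd:
  assumes "h \<in> {1..k}"
  shows "radius_s k (s(h := t)) \<le> radius_s k s + cmod (t - s h)"
proof -
  have "(\<Sum>l=1..k. cmod ((s(h := t)) l)) \<le>
      (\<Sum>l=1..k. cmod (s l) + (if l = h then cmod (t - s h) else 0))"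
    using norm_triangle_ineq[of "s h" "t - s h"] by (intro sum_mono) auto
  with assms show ?thesis
    unfolding radius_s_def by (simp add: sum.distrib)
qed

lemma holomorphic_on_Ps [holomorphic_intros]: "Ps k s holomorphic_on A"
  unfolding Ps_def by (intro holomorphic_intros)

lemma continuous_on_Ps [continuous_intros]:
  "continuous_on A f \<Longrightarrow> continuous_on A (\<lambda>x. Ps k s (f x))"
  unfolding Ps_def by (intro continuous_intros)

lemma norm_circlepath_0: "R \<ge> 0 \<Longrightarrow> cmod (circlepath 0 R t) = R"
  by (simp add: circlepath norm_mult)

lemma contour_integral_div_Ps_radius_indep:
  assumes g: "g holomorphic_on UNIV" and R1: "radius_s k s \<le> R1" and R12: "R1 \<le> R2"
  shows "contour_integral (circlepath 0 R1) (\<lambda>\<zeta>. g \<zeta> / Ps k s \<zeta>) =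
    contour_integral (circlepath 0 R2) (\<lambda>\<zeta>. g \<zeta> / Ps k s \<zeta>)"
proof -
  define S where "S = {z. Ps k s z \<noteq> 0}"
  have "open S"
    unfolding S_def
    by (rule open_Collect_neq[OF continuous_on_Ps[OF continuous_on_id] continuous_on_const])
  moreover have "(\<lambda>\<zeta>. g \<zeta> / Ps k s \<zeta>) holomorphic_on S"
    unfolding S_def by (intro holomorphic_intros holomorphic_on_subset[OF g]) auto
  moreover have "homotopic_loops S (circlepath 0 R1) (circlepath 0 R2)"
  proof (rule homotopic_loops_linear)
    fix t :: real
    show "closed_segment (circlepath 0 R1 t) (circlepath 0 R2 t) \<subseteq> S"
    proof
      fix y assume "y \<in> closed_segment (circlepath 0 R1 t) (circlepath 0 R2 t)"
      then obtain u where u: "0 \<le> u" "u \<le> 1"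
        and "y = (1 - u) *\<^sub>R circlepath 0 R1 t + u *\<^sub>R circlepath 0 R2 t"
        unfolding closed_segment_def by auto
      then have y: "y = circlepath 0 ((1 - u) * R1 + u * R2) t"
        by (simp add: circlepath scaleR_conv_of_real algebra_simps)
      have "R1 \<le> (1 - u) * R1 + u * R2"
        using u R12 mult_left_mono[OF R12, of u] by (simp add: algebra_simps)
      moreover have "R1 \<ge> 0"
        using R1 radius_s_ge_1[of k s] by linarith
      ultimately have "radius_s k s \<le> cmod y"
        unfolding y using R1 by (subst norm_circlepath_0) auto
      then show "y \<in> S"
        by (simp add: S_def Ps_nonzero)
    qed
  qed auto
  ultimately show ?thesis
    by (intro Cauchy_theorem_homotopic_loops) auto
qed

lemma PhiF_eq_contour_integral:
  assumes "i \<in> {1..k}" and "g holomorphic_on UNIV" and "radius_s k s \<le> R"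
  shows "PhiF k g s i =
    contour_integral (circlepath 0 R) (\<lambda>\<zeta>. g \<zeta> * \<zeta>^(i-1) / Ps k s \<zeta>) / (2 * complex_of_real pi * \<i>)"
proof -
  have "(\<lambda>\<zeta>. g \<zeta> * \<zeta>^(i-1)) holomorphic_on UNIV"
    using assms(2) by (intro holomorphic_intros)
  from contour_integral_div_Ps_radius_indep[OF this order_refl assms(3)] assms(1) show ?thesis
    by (simp add: PhiF_def)
qed

lemma contour_integrable_div_Ps:
  assumes "continuous_on UNIV g" and "radius_s k s \<le> R"
  shows "(\<lambda>\<zeta>. g \<zeta> / Ps k s \<zeta>) contour_integrable_on circlepath 0 R"
proof (rule contour_integrable_continuous_circlepath)
  have "R \<ge> 0"
    using assms(2) radius_s_ge_1[of k s] by linarith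
  with assms show "continuous_on (path_image (circlepath 0 R)) (\<lambda>\<zeta>. g \<zeta> / Ps k s \<zeta>)"
    by (intro continuous_on_divide continuous_on_subset[OF assms(1)] continuous_intros)
      (auto intro!: Ps_nonzero)
qed

lemma PhiF_mult_less:
  assumes "1 \<le> i" and "i < k"
  shows "PhiF k (\<lambda>\<zeta>. \<zeta> * g \<zeta>) s i = PhiF k g s (i + 1)"
proof -
  have "(\<lambda>\<zeta>. \<zeta> * g \<zeta> * \<zeta>^(i-1) / Ps k s \<zeta>) = (\<lambda>\<zeta>. g \<zeta> * \<zeta>^(i+1-1) / Ps k s \<zeta>)"
    using assms by (cases i) (auto simp: fun_eq_iff)
  with assms show ?thesis
    by (simp add: PhiF_def)
qed

lemma companion_last_row_div_Ps:
  assumes "Ps k s \<zeta> \<noteq> 0"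
  shows "(\<Sum>j=1..k. companion k s k j * (g \<zeta> * \<zeta>^(j-1) / Ps k s \<zeta>)) = g \<zeta> * \<zeta>^k / Ps k s \<zeta> - g \<zeta>"
proof -
  have "(\<Sum>j=1..k. companion k s k j * (g \<zeta> * \<zeta>^(j-1) / Ps k s \<zeta>)) =
      g \<zeta> / Ps k s \<zeta> * (\<Sum>j=1..k. companion k s k j * \<zeta>^(j-1))"
    by (simp add: sum_distrib_left algebra_simps)
  also have "\<dots> = g \<zeta> * \<zeta>^k / Ps k s \<zeta> - g \<zeta>"
    unfolding companion_last_row_poly using assms by (simp add: field_simps)
  finally show ?thesis .
qed

lemma PhiF_mult_last:
  assumes g: "g holomorphic_on UNIV" and k: "k \<ge> 1"
  shows "PhiF k (\<lambda>\<zeta>. \<zeta> * g \<zeta>) s k = (\<Sum>j=1..k. companion k s k j * PhiF k g s j)"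
proof -
  define R where "R = radius_s k s"
  let ?\<gamma> = "circlepath 0 R"
  have gc: "continuous_on UNIV g"
    using g by (rule holomorphic_on_imp_continuous_on)
  have int: "(\<lambda>\<zeta>. h \<zeta> / Ps k s \<zeta>) contour_integrable_on ?\<gamma>" if "continuous_on UNIV h" for h
    using contour_integrable_div_Ps[OF that] by (simp add: R_def)
  have int_j: "(\<lambda>\<zeta>. g \<zeta> * \<zeta>^(j-1) / Ps k s \<zeta>) contour_integrable_on ?\<gamma>" for j
    by (intro int continuous_intros gc)
  have "(\<Sum>j=1..k. companion k s k j * contour_integral ?\<gamma> (\<lambda>\<zeta>. g \<zeta> * \<zeta>^(j-1) / Ps k s \<zeta>)) =
      (\<Sum>j=1..k. contour_integral ?\<gamma> (\<lambda>\<zeta>. companion k s k j * (g \<zeta> * \<zeta>^(j-1) / Ps k s \<zeta>)))"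
    by (simp only: contour_integral_lmul[OF int_j])
  also have "\<dots> = contour_integral ?\<gamma> (\<lambda>\<zeta>. \<Sum>j=1..k. companion k s k j * (g \<zeta> * \<zeta>^(j-1) / Ps k s \<zeta>))"
    by (rule contour_integral_sum[symmetric])
      (simp_all only: finite_atLeastAtMost contour_integrable_lmul[OF int_j])
  also have "\<dots> = contour_integral ?\<gamma> (\<lambda>\<zeta>. g \<zeta> * \<zeta>^k / Ps k s \<zeta> - g \<zeta>)"
  proof (rule contour_integral_cong[OF refl])
    fix \<zeta> assume "\<zeta> \<in> path_image ?\<gamma>"
    then have "Ps k s \<zeta> \<noteq> 0"
      using radius_s_ge_1[of k s] by (intro Ps_nonzero) (simp add: R_def)
    then show "(\<Sum>j=1..k. companion k s k j * (g \<zeta> * \<zeta>^(j-1) / Ps k s \<zeta>)) =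
        g \<zeta> * \<zeta>^k / Ps k s \<zeta> - g \<zeta>"
      by (rule companion_last_row_div_Ps)
  qed
  also have "\<dots> = contour_integral ?\<gamma> (\<lambda>\<zeta>. g \<zeta> * \<zeta>^k / Ps k s \<zeta>) - contour_integral ?\<gamma> g"
    by (intro contour_integral_diff int contour_integrable_holomorphic_simple[OF g] continuous_intros gc)
      auto
  also have "contour_integral ?\<gamma> g = 0"
    by (rule contour_integral_unique, rule Cauchy_theorem_disc_simple[of g 0 "\<bar>R\<bar> + 1"])
      (auto intro: holomorphic_on_subset[OF g])
  finally have "(\<Sum>j=1..k. companion k s k j * contour_integral ?\<gamma> (\<lambda>\<zeta>. g \<zeta> * \<zeta>^(j-1) / Ps k s \<zeta>)) =
      contour_integral ?\<gamma> (\<lambda>\<zeta>. \<zeta> * g \<zeta> * \<zeta>^(k-1) / Ps k s \<zeta>)"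
    using k by (cases k) (simp_all add: mult_ac)
  moreover have "(\<Sum>j=1..k. companion k s k j * PhiF k g s j) = (\<Sum>j=1..k. companion k s k j *
      contour_integral ?\<gamma> (\<lambda>\<zeta>. g \<zeta> * \<zeta>^(j-1) / Ps k s \<zeta>)) / (2 * complex_of_real pi * \<i>)"
    unfolding sum_divide_distrib by (intro sum.cong) (auto simp: PhiF_def R_def)
  ultimately show ?thesis
    using k by (simp add: PhiF_def R_def)
qed

lemma matvec_companion_PhiF:
  assumes "g holomorphic_on UNIV" and "i \<in> {1..k}"
  shows "matvec k (companion k s) (PhiF k g s) i = PhiF k (\<lambda>\<zeta>. \<zeta> * g \<zeta>) s i"
proof (cases "i < k")
  case True
  with assms show ?thesis
    by (simp add: matvec_companion_less PhiF_mult_less)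
next
  case False
  with assms show ?thesis
    by (simp add: matvec_def PhiF_mult_last)
qed

lemma matpow_companion_PhiF:
  assumes g: "g holomorphic_on UNIV" and "i \<in> {1..k}"
  shows "matpow_vec k (companion k s) m (PhiF k g s) i = PhiF k (\<lambda>\<zeta>. \<zeta>^m * g \<zeta>) s i"
  using assms(2)
proof (induction m arbitrary: i)
  case (Suc m)
  have "matpow_vec k (companion k s) (Suc m) (PhiF k g s) i =
      matvec k (companion k s) (PhiF k (\<lambda>\<zeta>. \<zeta>^m * g \<zeta>) s) i"
    unfolding matpow_vec_Suc by (simp only: matvec_cong[OF Suc.IH])
  also have "\<dots> = PhiF k (\<lambda>\<zeta>. \<zeta> * (\<zeta>^m * g \<zeta>)) s i"
    using g Suc.prems by (intro matvec_companion_PhiF holomorphic_intros)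
  finally show ?case
    by (simp add: mult.assoc)
qed simp

text \<open>The radius is enlarged by 1 so that the circle stays outside the roots of P while s_h
  moves in the unit disc around s h.\<close>

lemma PhiF_has_field_derivative:
  assumes h: "h \<in> {1..k}" and i: "i \<in> {1..k}" and g: "g holomorphic_on UNIV"
  shows "((\<lambda>t. PhiF k g (s(h := t)) i) has_field_derivative
    contour_integral (circlepath 0 (radius_s k s + 1))
      (\<lambda>\<zeta>. - ((-1)^h * \<zeta>^(k-h)) * (g \<zeta> * \<zeta>^(i-1)) / (Ps k s \<zeta>)^2) / (2 * complex_of_real pi * \<i>))
    (at (s h))"
proof -
  define R where "R = radius_s k s + 1"
  let ?a = "\<lambda>\<zeta>::complex. (-1)^h * \<zeta>^(k-h)"
  let ?G = "\<lambda>\<zeta>. g \<zeta> * \<zeta>^(i-1)"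
  have P: "Ps k (s(h := t)) \<zeta> = Ps k s \<zeta> + ?a \<zeta> * (t - s h)" for t \<zeta>
    using Ps_fun_upd[OF h] by simp
  have rad: "radius_s k (s(h := t)) \<le> R" if "t \<in> ball (s h) 1" for t
    using radius_s_fun_upd[OF h, of s t] that by (simp add: R_def dist_norm norm_minus_commute)
  have "R \<ge> 0"
    using radius_s_ge_1[of k s] by (simp add: R_def)
  then have nz: "Ps k (s(h := t)) \<zeta> \<noteq> 0" if "t \<in> ball (s h) 1" and "\<zeta> \<in> sphere 0 \<bar>R\<bar>" for t \<zeta>
    using rad[OF that(1)] that(2) by (intro Ps_nonzero) auto
  have gc: "continuous_on A (\<lambda>p::complex \<times> complex. g (snd p))" for A
    by (rule continuous_on_compose2[OF holomorphic_on_imp_continuous_on[OF g]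
          continuous_on_snd[OF continuous_on_id]]) auto
  have "((\<lambda>t. contour_integral (circlepath 0 R) (\<lambda>\<zeta>. ?G \<zeta> / Ps k (s(h := t)) \<zeta>)) has_field_derivative
      contour_integral (circlepath 0 R) (\<lambda>\<zeta>. - ?a \<zeta> * ?G \<zeta> / (Ps k (s(h := s h)) \<zeta>)^2)) (at (s h))"
  proof (rule has_field_derivative_circlepath_integral_param)
    fix t \<zeta> :: complex assume t: "t \<in> ball (s h) 1" and \<zeta>: "\<zeta> \<in> sphere 0 \<bar>R\<bar>"
    have "((\<lambda>t. Ps k s \<zeta> + ?a \<zeta> * (t - s h)) has_field_derivative ?a \<zeta>) (at t)"
      by (auto intro!: derivative_eq_intros)
    from DERIV_divide[OF DERIV_const this nz[OF t \<zeta>, unfolded P]]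
    show "((\<lambda>t. ?G \<zeta> / Ps k (s(h := t)) \<zeta>) has_field_derivative
        - ?a \<zeta> * ?G \<zeta> / (Ps k (s(h := t)) \<zeta>)^2) (at t)"
      by (simp add: P power2_eq_square mult.commute)
  next
    show "continuous_on (ball (s h) 1 \<times> sphere 0 \<bar>R\<bar>) (\<lambda>(t, \<zeta>). ?G \<zeta> / Ps k (s(h := t)) \<zeta>)"
      unfolding P split_beta by (intro continuous_intros gc) (use nz in \<open>auto simp: P\<close>)
    show "continuous_on (ball (s h) 1 \<times> sphere 0 \<bar>R\<bar>)
        (\<lambda>(t, \<zeta>). - ?a \<zeta> * ?G \<zeta> / (Ps k (s(h := t)) \<zeta>)^2)"
      unfolding P split_beta by (intro continuous_intros gc) (use nz in \<open>auto simp: P\<close>)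
  qed auto
  from DERIV_cdivide[OF this[unfolded fun_upd_triv], of "2 * complex_of_real pi * \<i>"]
  have "((\<lambda>t. PhiF k g (s(h := t)) i) has_field_derivative
      contour_integral (circlepath 0 R) (\<lambda>\<zeta>. - ?a \<zeta> * ?G \<zeta> / (Ps k s \<zeta>)^2) /
        (2 * complex_of_real pi * \<i>))
      (at (s h))"
    by (rule has_field_derivative_transform_within_open[of _ _ _ "ball (s h) 1"])
      (auto simp: PhiF_eq_contour_integral[OF i g rad])
  then show ?thesis
    by (simp add: R_def)
qed

lemma solves_sys_PhiF:
  assumes f: "f holomorphic_on UNIV"
  shows "solves_sys k (PhiF k f)"
  unfolding solves_sys_def
proof (intro allI ballI)
  fix s h i assume h: "h \<in> {1..k-1}" and i: "i \<in> {1..k}"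
  then have hk: "h \<in> {1..k}" and kk: "k \<in> {1..k}"
    by auto
  let ?\<gamma> = "circlepath 0 (radius_s k s + 1)"
  let ?d = "2 * complex_of_real pi * \<i>"
  have "pderiv_s h (PhiF k f) s i =
      contour_integral ?\<gamma> (\<lambda>\<zeta>. - ((-1)^h * \<zeta>^(k-h)) * (f \<zeta> * \<zeta>^(i-1)) / (Ps k s \<zeta>)^2) / ?d"
    unfolding pderiv_s_def by (intro DERIV_imp_deriv PhiF_has_field_derivative hk i f)
  also have "\<dots> = (-1)^(k+h) *
      (contour_integral ?\<gamma> (\<lambda>\<zeta>. - ((-1)^k * \<zeta>^(k-k)) * (\<zeta>^(k-h) * f \<zeta> * \<zeta>^(i-1)) / (Ps k s \<zeta>)^2) / ?d)"
  proof -
    have integrand: "- ((-1)^h * \<zeta>^(k-h)) * (f \<zeta> * \<zeta>^(i-1)) / (Ps k s \<zeta>)^2 =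
        (-1)^(k+h) * (- ((-1)^k * \<zeta>^(k-k)) * (\<zeta>^(k-h) * f \<zeta> * \<zeta>^(i-1)) / (Ps k s \<zeta>)^2)" for \<zeta>
      by (cases "even k"; cases "even h") (simp_all add: power_add)
    show ?thesis
      unfolding integrand contour_integral_circlepath_lmul by simp
  qed
  also have "contour_integral ?\<gamma>
        (\<lambda>\<zeta>. - ((-1)^k * \<zeta>^(k-k)) * (\<zeta>^(k-h) * f \<zeta> * \<zeta>^(i-1)) / (Ps k s \<zeta>)^2) / ?d =
      pderiv_s k (\<lambda>s'. matpow_vec k (companion k s') (k-h) (PhiF k f s')) s i"
    unfolding pderiv_s_def matpow_companion_PhiF[OF f i]
    by (intro DERIV_imp_deriv[symmetric] PhiF_has_field_derivative kk i holomorphic_intros f)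
  finally show "(-1)^(k+h) * pderiv_s h (PhiF k f) s i =
      pderiv_s k (\<lambda>s'. matpow_vec k (companion k s') (k-h) (PhiF k f s')) s i"
    by simp
qed

theorem mainTheorem3:
  fixes k :: nat
  assumes "k \<ge> 2"
  shows "(\<forall>f. f holomorphic_on UNIV \<longrightarrow> solves_sys k (PhiF k f))
    \<and> (\<forall>\<Phi>. holo_k k \<Phi> \<and> solves_sys k \<Phi> \<longrightarrow>
         (\<forall>s. \<forall>h\<in>{1..k-1}. \<forall>j\<in>{1..k-1}. \<forall>i\<in>{1..k}.
            (-1)^(h+j) * pderiv_s j (pderiv_s h \<Phi>) s i =
            pderiv_s k (pderiv_s k (\<lambda>s'. matpow_vec k (companion k s') (2*k-h-j) (\<Phi> s'))) s i))
    \<and> (\<forall>\<Phi>. holo_k k \<Phi> \<and> solves_sys k \<Phi> \<longrightarrow>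
         holo_k k (\<lambda>s. matvec k (companion k s) (\<Phi> s)) \<and>
         solves_sys k (\<lambda>s. matvec k (companion k s) (\<Phi> s)))"
  using solves_sys_PhiF solves_sys_second_order holo_k_matvec_companion solves_sys_matvec_companion
    holo_k_imp_separately_holomorphic
  by blast

end
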